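(* Assume $M$ is nonempty. Then $M$ is connected if and only if for each $k\in\{1,\dots,d\}$ there is a point $(a,b)\in K$ with $a_k=|b_k|$.
   Context: Let $\mathbb C^{d,d}=\mathbb C^d\times\mathbb C^d$ with coordinates $(z,w)$; $\mathbb T^d$ acts by $(z_k,w_k)\mapsto(e^{i\theta_k}z_k,e^{i\theta_k}w_k)$. Fix $u_1,\dots,u_d\in\mathbb Z^n$ spanning $\mathbb R^n$; let $\beta\colon\mathbb R^d\to\mathbb R^n$, $e_k\mapsto u_k$, $\mathfrak n=\ker\beta$ with inclusion $\iota$, and $N\subset\mathbb T^d$ the kernel of the induced homomorphism $\mathbb T^d\to\mathbb T^n$. Identify $\mathbb R^d$ with its dual via the standard inner product. Fix real constants $\lambda^{(j)}_k$, put $\lambda^{(c)}_k=\lambda^{(2)}_k+i\lambda^{(3)}_k$, and let $\mu=(\mu_I,\mu_S,\mu_T)$ with $\mu_I(z,w)=\sum_k(\tfrac12(|z_k|^2+|w_k|^2)+\lambda^{(1)}_k)\iota^*e_k$, $(\mu_S+i\mu_T)(z,w)=\sum_k(iz_k\bar w_k+\lambda^{(c)}_k)\iota^*e_k$; $M=\mu^{-1}(0)/N$. For $(a,b)\in\mathbb R^n\times\mathbb C^n$, $a_k=\langle a,u_k\rangle-\lambda^{(1)}_k$, $b_k=\langle b,u_k\rangle-\lambda^{(c)}_k$, and $K=\{(a,b): a_k\geqslant|b_k|\ \forall k\}$ (this is the image of the moment map $\phi$ of the $\mathbb T^d/N$-action on $M$). *)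

theory Defs
  imports "HOL-Analysis.Analysis"
begin

definition quot_topology :: "'a topology \<Rightarrow> ('a \<Rightarrow> 'b) \<Rightarrow> 'b topology" where
  "quot_topology X f =
     topology (\<lambda>U. U \<subseteq> f ` topspace X \<and> openin X {x \<in> topspace X. f x \<in> U})"

lemma istopology_quot: "istopology (\<lambda>U. U \<subseteq> f ` topspace X \<and> openin X {x \<in> topspace X. f x \<in> U})"
proof -
  have 1: "{x \<in> topspace X. f x \<in> S \<inter> T} = {x \<in> topspace X. f x \<in> S} \<inter> {x \<in> topspace X. f x \<in> T}" for S T
    by blast
  have 2: "{x \<in> topspace X. f x \<in> \<Union>K} = (\<Union>S\<in>K. {x \<in> topspace X. f x \<in> S})" for K
    by blast
  show ?thesis
    unfolding istopology_def
    by (auto simp only: 1 2 intro!: openin_Int openin_Union)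
qed

lemma openin_quot_topology:
  "openin (quot_topology X f) U \<longleftrightarrow> U \<subseteq> f ` topspace X \<and> openin X {x \<in> topspace X. f x \<in> U}"
  unfolding quot_topology_def by (simp add: topology_inverse'[OF istopology_quot])

text \<open>The setting. Index type 'd = {1..d}, 'n = {1..n}.
  u k :: int^'n are the weights; lam1, lam2, lam3 the real constants.\<close>

definition torus :: "(complex^'d) set" where
  "torus = {t. \<forall>k. cmod (t $ k) = 1}"

text \<open>N = kernel of the homomorphism T^d \<rightarrow> T^n induced by beta (e_k \<mapsto> u_k):
  (e^{i theta_k})_k \<mapsto> (e^{i <theta, column j>})_j = (\<Prod>k t_k^{u_k j})_j.\<close>
definition Nsub :: "('d::finite \<Rightarrow> int^'n::finite) \<Rightarrow> (complex^'d) set" where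
  "Nsub u = {t \<in> torus. \<forall>j. (\<Prod>k\<in>UNIV. (t $ k) powi (u k $ j)) = 1}"

definition tact :: "complex^'d \<Rightarrow> ((complex^'d) \<times> (complex^'d)) \<Rightarrow> ((complex^'d) \<times> (complex^'d))" where
  "tact t p = ((\<chi> k. t $ k * fst p $ k), (\<chi> k. t $ k * snd p $ k))"

definition beta :: "('d::finite \<Rightarrow> int^'n::finite) \<Rightarrow> real^'d \<Rightarrow> real^'n" where
  "beta u x = (\<Sum>k\<in>UNIV. x $ k *\<^sub>R (\<chi> j. real_of_int (u k $ j)))"

definition nker :: "('d::finite \<Rightarrow> int^'n::finite) \<Rightarrow> (real^'d) set" where
  "nker u = {x. beta u x = 0}"

text \<open>A functional \<Sum>_k c_k iota^* e_k on n (c \<in> C^d) vanishes iff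
  \<Sum>_k c_k x_k = 0 for all x \<in> n. mu^{-1}(0):\<close>
definition levelset ::
  "('d::finite \<Rightarrow> int^'n::finite) \<Rightarrow> ('d \<Rightarrow> real) \<Rightarrow> ('d \<Rightarrow> real) \<Rightarrow> ('d \<Rightarrow> real)
     \<Rightarrow> ((complex^'d) \<times> (complex^'d)) set" where
  "levelset u lam1 lam2 lam3 = {(z, w).
     \<forall>x \<in> nker u.
       (\<Sum>k\<in>UNIV. x $ k * ((cmod (z $ k))\<^sup>2 + (cmod (w $ k))\<^sup>2) / 2 + x $ k * lam1 k) = 0 \<and>
       (\<Sum>k\<in>UNIV. complex_of_real (x $ k) *
           (\<i> * z $ k * cnj (w $ k) + Complex (lam2 k) (lam3 k))) = 0}"

text \<open>M = mu^{-1}(0)/N with the quotient topology; points are N-orbits.\<close>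
definition orbitN :: "('d::finite \<Rightarrow> int^'n::finite) \<Rightarrow> ((complex^'d) \<times> (complex^'d))
     \<Rightarrow> ((complex^'d) \<times> (complex^'d)) set" where
  "orbitN u p = (\<lambda>t. tact t p) ` Nsub u"

definition Mspace ::
  "('d::finite \<Rightarrow> int^'n::finite) \<Rightarrow> ('d \<Rightarrow> real) \<Rightarrow> ('d \<Rightarrow> real) \<Rightarrow> ('d \<Rightarrow> real)
     \<Rightarrow> ((complex^'d) \<times> (complex^'d)) set topology" where
  "Mspace u lam1 lam2 lam3 = quot_topology (top_of_set (levelset u lam1 lam2 lam3)) (orbitN u)"

definition acoord :: "('d::finite \<Rightarrow> int^'n::finite) \<Rightarrow> ('d \<Rightarrow> real) \<Rightarrow> real^'n \<Rightarrow> 'd \<Rightarrow> real" where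
  "acoord u lam1 a k = (\<Sum>j\<in>UNIV. a $ j * real_of_int (u k $ j)) - lam1 k"

definition bcoord :: "('d::finite \<Rightarrow> int^'n::finite) \<Rightarrow> ('d \<Rightarrow> real) \<Rightarrow> ('d \<Rightarrow> real)
     \<Rightarrow> complex^'n \<Rightarrow> 'd \<Rightarrow> complex" where
  "bcoord u lam2 lam3 b k = (\<Sum>j\<in>UNIV. b $ j * of_int (u k $ j)) - Complex (lam2 k) (lam3 k)"

definition Kset :: "('d::finite \<Rightarrow> int^'n::finite) \<Rightarrow> ('d \<Rightarrow> real) \<Rightarrow> ('d \<Rightarrow> real) \<Rightarrow> ('d \<Rightarrow> real)
     \<Rightarrow> ((real^'n) \<times> (complex^'n)) set" where
  "Kset u lam1 lam2 lam3 = {(a, b). \<forall>k. acoord u lam1 a k \<ge> cmod (bcoord u lam2 lam3 b k)}"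

end

(*
  Write L = mu^-1(0) and psi(z, w) = ((|z_k|^2 + |w_k|^2) / 2, i z_k conj(w_k))_k. Then L is the
  psi-preimage of a convex set Q (the set K in the coordinates a_k, b_k), which lies in the cone
  |gamma_k| <= alpha_k. On each chamber {|z_k| <= |w_k| for k in F, |w_k| <= |z_k| otherwise}, psi is
  a proper map onto that cone whose fibres are orbits of the full torus T^d, so the part of L in a
  chamber is connected. The chambers for F and F + {k} meet over every point of Q with
  alpha_k = |gamma_k|; if such points exist for all k, the chambers chain together and L, hence its
  quotient M, is connected. Conversely, |z_k| - |w_k| is N-invariant and changes sign under
  (z_k, w_k) |-> (conj w_k, conj z_k), which preserves L; so on a connected M it must vanish
  somewhere, giving a point of Q with alpha_k = |gamma_k|.
*)
theory Submission
  imports Defs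
begin

section \<open>Quotient topology\<close>

lemma topspace_quot_topology: "topspace (quot_topology X f) = f ` topspace X"
proof
  show "topspace (quot_topology X f) \<subseteq> f ` topspace X"
    using openin_topspace[of "quot_topology X f"] unfolding openin_quot_topology by blast
  have "openin (quot_topology X f) (f ` topspace X)"
  proof -
    have "{x \<in> topspace X. f x \<in> f ` topspace X} = topspace X"
      by blast
    then show ?thesis
      unfolding openin_quot_topology by simp
  qed
  then show "f ` topspace X \<subseteq> topspace (quot_topology X f)"
    by (rule openin_subset)
qed

lemma quotient_map_quot_topology: "quotient_map X (quot_topology X f) f"
  unfolding quotient_map_def topspace_quot_topology openin_quot_topology by auto

lemma connectedin_image_of_quotient_invariant:
  assumes "quotient_map X Y q" "connected_space Y" "continuous_map X Z h"
    and "\<And>x y. \<lbrakk>x \<in> topspace X; y \<in> topspace X; q x = q y\<rbrakk> \<Longrightarrow> h x = h y"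
  shows "connectedin Z (h ` topspace X)"
proof -
  obtain g where "continuous_map Y Z g" "g ` topspace Y = h ` topspace X"
    using quotient_map_lift_exists[OF assms(1,3)] assms(4) by metis
  then show ?thesis
    using connectedin_continuous_map_image assms(2) connectedin_topspace by metis
qed

section \<open>One quaternionic coordinate\<close>

lemma cmod_mult_cnj_le:
  "cmod (\<i> * z * cnj w) \<le> ((cmod z)\<^sup>2 + (cmod w)\<^sup>2) / 2"
  using sum_squares_bound[of "cmod z" "cmod w"] by (simp add: norm_mult)

lemma cmod_mult_cnj_eq_iff:
  "cmod (\<i> * z * cnj w) = ((cmod z)\<^sup>2 + (cmod w)\<^sup>2) / 2 \<longleftrightarrow> cmod z = cmod w"
proof -
  have "cmod z * cmod w = ((cmod z)\<^sup>2 + (cmod w)\<^sup>2) / 2 \<longleftrightarrow> (cmod z - cmod w)\<^sup>2 = 0"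
    by (auto simp: power2_diff)
  then show ?thesis
    by (simp add: norm_mult)
qed

lemma nonneg_eq_if_same_sum_squares_and_product:
  fixes a b a' b' :: real
  assumes "0 \<le> a" "0 \<le> b" "0 \<le> a'" "0 \<le> b'"
    and "a * b = a' * b'" "a\<^sup>2 + b\<^sup>2 = a'\<^sup>2 + b'\<^sup>2"
    and "(a \<le> b \<and> a' \<le> b') \<or> (b \<le> a \<and> b' \<le> a')"
  shows "a = a' \<and> b = b'"
proof -
  have "(a + b)\<^sup>2 = (a' + b')\<^sup>2" and "(a - b)\<^sup>2 = (a' - b')\<^sup>2"
    using assms(5,6) by (simp_all add: power2_sum power2_diff)
  then have "a + b = a' + b'" and "\<bar>a - b\<bar> = \<bar>a' - b'\<bar>"
    using assms(1-4) by (simp add: power2_eq_iff_nonneg, metis real_sqrt_abs)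
  then show ?thesis
    using assms(7) by auto
qed

lemma unit_scalar_if_same_moment:
  fixes z w z' w' :: complex
  assumes "z * cnj w = z' * cnj w'" "(cmod z)\<^sup>2 + (cmod w)\<^sup>2 = (cmod z')\<^sup>2 + (cmod w')\<^sup>2"
    and "(cmod z \<le> cmod w \<and> cmod z' \<le> cmod w') \<or> (cmod w \<le> cmod z \<and> cmod w' \<le> cmod z')"
  shows "\<exists>t. cmod t = 1 \<and> z' = t * z \<and> w' = t * w"
proof -
  have "cmod z * cmod w = cmod z' * cmod w'"
    using arg_cong[OF assms(1), of cmod] by (simp add: norm_mult)
  then have zz': "cmod z = cmod z'" and ww': "cmod w = cmod w'"
    using nonneg_eq_if_same_sum_squares_and_product[of "cmod z" "cmod w" "cmod z'" "cmod w'"] assms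
    by auto
  show ?thesis
  proof (cases "z = 0")
    case False
    define t where "t = z' / z"
    have t: "cmod t = 1"
      unfolding t_def norm_divide zz'[symmetric] using False by simp
    have z': "z' = t * z"
      using False by (simp add: t_def)
    then have "cnj w = t * cnj w'"
      using assms(1) False by (simp add: mult.left_commute)
    then have "t * w = (t * cnj t) * w'"
      by (metis complex_cnj_cnj complex_cnj_mult mult.assoc)
    also have "t * cnj t = 1"
      using t complex_norm_square[of t] by simp
    finally show ?thesis
      using t z' by auto
  next
    case True
    then have "z' = 0"
      using zz' by simp
    show ?thesis
    proof (cases "w = 0")
      case True
      then show ?thesis
        using \<open>z = 0\<close> \<open>z' = 0\<close> ww' by (intro exI[of _ 1]) simp
    next
      case False
      then show ?thesis
        using \<open>z = 0\<close> \<open>z' = 0\<close>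
        by (intro exI[of _ "w' / w"]) (simp add: norm_divide flip: ww')
    qed
  qed
qed

lemma ex_pair_with_moment:
  fixes \<alpha> :: real and \<gamma> :: complex
  assumes "cmod \<gamma> \<le> \<alpha>"
  shows "\<exists>z w. ((cmod z)\<^sup>2 + (cmod w)\<^sup>2) / 2 = \<alpha> \<and> \<i> * z * cnj w = \<gamma> \<and> cmod w \<le> cmod z"
proof -
  define s where "s = sqrt (\<alpha>\<^sup>2 - (cmod \<gamma>)\<^sup>2)"
  define r where "r = sqrt (\<alpha> + s)"
  have "0 \<le> \<alpha>"
    using assms norm_ge_zero order_trans by blast
  moreover have "(cmod \<gamma>)\<^sup>2 \<le> \<alpha>\<^sup>2"
    using assms by (simp add: power_mono)
  ultimately have s: "0 \<le> s" "s\<^sup>2 = \<alpha>\<^sup>2 - (cmod \<gamma>)\<^sup>2" and r: "0 \<le> r" "r\<^sup>2 = \<alpha> + s"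
    by (simp_all add: s_def r_def)
  show ?thesis
  proof (cases "r = 0")
    case True
    then have "\<alpha> = 0"
      using r s \<open>0 \<le> \<alpha>\<close> by simp
    moreover from this have "\<gamma> = 0"
      using assms by simp
    ultimately show ?thesis
      by (intro exI[of _ 0]) simp
  next
    case False
    define w where "w = \<i> * cnj \<gamma> / of_real r"
    have w: "cmod w = cmod \<gamma> / r"
      using r by (simp add: w_def norm_divide norm_mult)
    have "\<i> * of_real r * cnj w = \<gamma>"
      using False by (simp add: w_def)
    moreover have "(r\<^sup>2 + (cmod \<gamma> / r)\<^sup>2) / 2 = \<alpha>"
    proof -
      have "r\<^sup>2 * r\<^sup>2 + (cmod \<gamma>)\<^sup>2 = 2 * \<alpha> * r\<^sup>2"
        using r s by (simp add: power2_eq_square algebra_simps)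
      then show ?thesis
        using False by (simp add: power_divide field_simps)
    qed
    moreover have "cmod \<gamma> / r \<le> r"
      using False r s assms by (simp add: divide_le_eq power2_eq_square)
    ultimately show ?thesis
      using r w by (intro exI[of _ "of_real r"] exI[of _ w]) simp
  qed
qed

section \<open>The hyperkaehler moment map and its chambers\<close>

text \<open>The hyperkaehler moment map of the standard action of the full torus T^d on
  C^{d,d}, without the constants lambda.\<close>

definition hk_moment :: "(complex^'d::finite) \<times> (complex^'d) \<Rightarrow> (real^'d) \<times> (complex^'d)" where
  "hk_moment p =
     ((\<chi> k. ((cmod (fst p $ k))\<^sup>2 + (cmod (snd p $ k))\<^sup>2) / 2), (\<chi> k. \<i> * fst p $ k * cnj (snd p $ k)))"

lemma hk_moment_nth [simp]:
  "fst (hk_moment p) $ k = ((cmod (fst p $ k))\<^sup>2 + (cmod (snd p $ k))\<^sup>2) / 2"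
  "snd (hk_moment p) $ k = \<i> * fst p $ k * cnj (snd p $ k)"
  by (simp_all add: hk_moment_def)

lemma continuous_on_hk_moment: "continuous_on S hk_moment"
  unfolding hk_moment_def by (intro continuous_intros) auto

definition moment_cone :: "((real^'d::finite) \<times> (complex^'d)) set" where
  "moment_cone = {q. \<forall>k. cmod (snd q $ k) \<le> fst q $ k}"

lemma hk_moment_in_moment_cone: "hk_moment p \<in> moment_cone"
  unfolding moment_cone_def mem_Collect_eq hk_moment_nth by (blast intro: cmod_mult_cnj_le)

lemma convex_moment_cone: "convex (moment_cone :: ((real^'d::finite) \<times> (complex^'d)) set)"
proof (rule convexI)
  fix p q :: "(real^'d) \<times> (complex^'d)" and s t :: real
  assume pq: "p \<in> moment_cone" "q \<in> moment_cone" and st: "0 \<le> s" "0 \<le> t"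
  have "cmod (snd (s *\<^sub>R p + t *\<^sub>R q) $ k) \<le> fst (s *\<^sub>R p + t *\<^sub>R q) $ k" for k
  proof -
    have "cmod (snd (s *\<^sub>R p + t *\<^sub>R q) $ k) \<le> s * cmod (snd p $ k) + t * cmod (snd q $ k)"
      using norm_triangle_ineq[of "s *\<^sub>R snd p $ k" "t *\<^sub>R snd q $ k"] st by simp
    also have "\<dots> \<le> s * fst p $ k + t * fst q $ k"
      using pq st by (intro add_mono mult_left_mono) (auto simp: moment_cone_def)
    finally show ?thesis
      by simp
  qed
  then show "s *\<^sub>R p + t *\<^sub>R q \<in> moment_cone"
    by (simp add: moment_cone_def)
qed

lemma norm_tact_nth:
  assumes "t \<in> torus"
  shows "cmod (fst (tact t p) $ k) = cmod (fst p $ k)" "cmod (snd (tact t p) $ k) = cmod (snd p $ k)"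
  using assms by (simp_all add: tact_def torus_def norm_mult)

lemma hk_moment_tact:
  assumes "t \<in> torus"
  shows "hk_moment (tact t p) = hk_moment p"
proof -
  have "t $ k * cnj (t $ k) = 1" for k
    using assms complex_norm_square[of "t $ k"] by (simp add: torus_def)
  then have "\<i> * (t $ k * fst p $ k) * cnj (t $ k * snd p $ k) = \<i> * fst p $ k * cnj (snd p $ k)" for k
    by (metis complex_cnj_mult mult.assoc mult.left_commute mult_1)
  then show ?thesis
    using norm_tact_nth[OF assms] by (simp add: prod_eq_iff vec_eq_iff) (simp add: tact_def)
qed

lemma connected_torus: "connected (torus :: (complex^'d::finite) set)"
proof -
  have "torus = range (\<lambda>\<theta>::real^'d. \<chi> k. cis (\<theta> $ k))"
  proof (intro set_eqI iffI)
    fix t :: "complex^'d"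
    assume "t \<in> torus"
    then have "cmod (t $ k) = 1" for k
      by (simp add: torus_def)
    then have "cis (Arg (t $ k)) = t $ k" for k
      by (metis cis_Arg div_by_1 norm_zero of_real_1 sgn_eq zero_neq_one)
    then have "t = (\<chi> k. cis ((\<chi> k. Arg (t $ k)) $ k))"
      by (simp add: vec_eq_iff)
    then show "t \<in> range (\<lambda>\<theta>::real^'d. \<chi> k. cis (\<theta> $ k))"
      by blast
  qed (auto simp: torus_def)
  moreover have "connected (range (\<lambda>\<theta>::real^'d. \<chi> k. cis (\<theta> $ k)))"
    by (intro connected_continuous_image connected_UNIV continuous_intros)
  ultimately show ?thesis
    by simp
qed

definition chamber :: "'d::finite set \<Rightarrow> ((complex^'d) \<times> (complex^'d)) set" where
  "chamber F = {p. \<forall>k. if k \<in> F then cmod (fst p $ k) \<le> cmod (snd p $ k)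
                                 else cmod (snd p $ k) \<le> cmod (fst p $ k)}"

lemma closed_chamber: "closed (chamber F)"
proof -
  have "closed {p. if k \<in> F then cmod (fst p $ k) \<le> cmod (snd p $ k)
                             else cmod (snd p $ k) \<le> cmod (fst p $ k)}" for k
    by (cases "k \<in> F") (simp_all add: closed_Collect_le continuous_on_norm continuous_on_component
        continuous_on_fst continuous_on_snd)
  then show ?thesis
    unfolding chamber_def by (rule closed_Collect_all)
qed

lemma tact_in_chamber_iff:
  assumes "t \<in> torus"
  shows "tact t p \<in> chamber F \<longleftrightarrow> p \<in> chamber F"
  using norm_tact_nth[OF assms] by (simp add: chamber_def)

lemma chamber_insert:
  assumes "p \<in> chamber F" "cmod (fst p $ k) = cmod (snd p $ k)"
  shows "p \<in> chamber (insert k F)"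
  using assms by (auto simp: chamber_def)

definition reflect :: "'d set \<Rightarrow> (complex^'d::finite) \<times> (complex^'d) \<Rightarrow> (complex^'d) \<times> (complex^'d)" where
  "reflect F p = ((\<chi> k. if k \<in> F then cnj (snd p $ k) else fst p $ k),
                  (\<chi> k. if k \<in> F then cnj (fst p $ k) else snd p $ k))"

lemma norm_reflect_nth:
  "cmod (fst (reflect F p) $ k) = (if k \<in> F then cmod (snd p $ k) else cmod (fst p $ k))"
  "cmod (snd (reflect F p) $ k) = (if k \<in> F then cmod (fst p $ k) else cmod (snd p $ k))"
  by (simp_all add: reflect_def)

lemma hk_moment_reflect: "hk_moment (reflect F p) = hk_moment p"
  by (simp add: prod_eq_iff vec_eq_iff) (simp add: reflect_def add.commute mult.commute mult.left_commute)

lemma reflect_in_chamber: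
  assumes "p \<in> chamber {}"
  shows "reflect F p \<in> chamber F"
  using assms by (simp add: chamber_def norm_reflect_nth)

lemma hk_moment_chamber_image:
  fixes F :: "'d::finite set"
  shows "hk_moment ` chamber F = moment_cone"
proof
  show "hk_moment ` chamber F \<subseteq> moment_cone"
    using hk_moment_in_moment_cone by blast
  show "moment_cone \<subseteq> hk_moment ` chamber F"
  proof
    fix q :: "(real^'d) \<times> (complex^'d)"
    assume "q \<in> moment_cone"
    then have "\<forall>k. \<exists>z w. ((cmod z)\<^sup>2 + (cmod w)\<^sup>2) / 2 = fst q $ k \<and> \<i> * z * cnj w = snd q $ k \<and>
                        cmod w \<le> cmod z"
      unfolding moment_cone_def mem_Collect_eq by (metis ex_pair_with_moment)
    then obtain z w where zw: "\<And>k. ((cmod (z k))\<^sup>2 + (cmod (w k))\<^sup>2) / 2 = fst q $ k"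
        "\<And>k. \<i> * z k * cnj (w k) = snd q $ k" "\<And>k. cmod (w k) \<le> cmod (z k)"
      by metis
    define p where "p = ((\<chi> k. z k), (\<chi> k. w k))"
    have "p \<in> chamber {}" and "hk_moment p = q"
      using zw by (simp_all add: p_def chamber_def prod_eq_iff vec_eq_iff)
    then show "q \<in> hk_moment ` chamber F"
      by (metis hk_moment_reflect image_eqI reflect_in_chamber)
  qed
qed

lemma chamber_point_with_moment:
  fixes F :: "'d::finite set"
  assumes "q \<in> moment_cone"
  obtains p where "p \<in> chamber F" "hk_moment p = q"
  using assms hk_moment_chamber_image[of F] by (metis imageE)

lemma chamber_Int_fibre:
  assumes p: "p \<in> chamber F"
  shows "chamber F \<inter> hk_moment -` {hk_moment p} = (\<lambda>t. tact t p) ` torus"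
proof
  show "(\<lambda>t. tact t p) ` torus \<subseteq> chamber F \<inter> hk_moment -` {hk_moment p}"
    using p by (intro image_subsetI IntI) (simp_all add: hk_moment_tact tact_in_chamber_iff)
  show "chamber F \<inter> hk_moment -` {hk_moment p} \<subseteq> (\<lambda>t. tact t p) ` torus"
  proof
    fix q
    assume q: "q \<in> chamber F \<inter> hk_moment -` {hk_moment p}"
    have "\<exists>t. cmod t = 1 \<and> fst q $ k = t * fst p $ k \<and> snd q $ k = t * snd p $ k" for k
    proof (rule unit_scalar_if_same_moment)
      have "hk_moment p = hk_moment q"
        using q by simp
      then have "fst (hk_moment p) $ k = fst (hk_moment q) $ k"
        and "snd (hk_moment p) $ k = snd (hk_moment q) $ k"
        by simp_all
      then show "fst p $ k * cnj (snd p $ k) = fst q $ k * cnj (snd q $ k)"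
        and "(cmod (fst p $ k))\<^sup>2 + (cmod (snd p $ k))\<^sup>2 = (cmod (fst q $ k))\<^sup>2 + (cmod (snd q $ k))\<^sup>2"
        by simp_all
      show "cmod (fst p $ k) \<le> cmod (snd p $ k) \<and> cmod (fst q $ k) \<le> cmod (snd q $ k) \<or>
            cmod (snd p $ k) \<le> cmod (fst p $ k) \<and> cmod (snd q $ k) \<le> cmod (fst q $ k)"
        using p q by (auto simp: chamber_def split: if_splits)
    qed
    then obtain t where "\<And>k. cmod (t k) = 1" "\<And>k. fst q $ k = t k * fst p $ k"
      "\<And>k. snd q $ k = t k * snd p $ k"
      by metis
    then have "(\<chi> k. t k) \<in> torus" and "q = tact (\<chi> k. t k) p"
      by (simp_all add: torus_def tact_def prod_eq_iff vec_eq_iff)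
    then show "q \<in> (\<lambda>t. tact t p) ` torus"
      by blast
  qed
qed

lemma norm_vec_le_sum_norm_nth: "norm x \<le> (\<Sum>i\<in>UNIV. norm (x $ i))"
  unfolding norm_vec_def by (rule L2_set_le_sum) simp

lemma bounded_hk_moment_vimage:
  fixes Q :: "((real^'d::finite) \<times> (complex^'d)) set"
  assumes "bounded Q"
  shows "bounded (hk_moment -` Q)"
proof -
  obtain B where B: "\<And>q. q \<in> Q \<Longrightarrow> norm q \<le> B"
    using assms unfolding bounded_iff by auto
  have "norm p \<le> 2 * CARD('d) * sqrt (2 * B)" if "hk_moment p \<in> Q" for p
  proof -
    have "(cmod (fst p $ k))\<^sup>2 \<le> 2 * B \<and> (cmod (snd p $ k))\<^sup>2 \<le> 2 * B" for k
    proof -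
      have "fst (hk_moment p) $ k \<le> norm (fst (hk_moment p))"
        using component_le_norm_cart abs_le_D1 by blast
      also have "\<dots> \<le> B"
        by (metis B[OF that] norm_fst_le prod.collapse order_trans)
      finally have "(cmod (fst p $ k))\<^sup>2 + (cmod (snd p $ k))\<^sup>2 \<le> 2 * B"
        by simp
      then show ?thesis
        using zero_le_power2[of "cmod (fst p $ k)"] zero_le_power2[of "cmod (snd p $ k)"] by linarith
    qed
    then have "cmod (fst p $ k) \<le> sqrt (2 * B) \<and> cmod (snd p $ k) \<le> sqrt (2 * B)" for k
      by (simp add: real_le_rsqrt)
    then have "norm (fst p) \<le> CARD('d) * sqrt (2 * B)" "norm (snd p) \<le> CARD('d) * sqrt (2 * B)"
      by (intro order_trans[OF norm_vec_le_sum_norm_nth sum_bounded_above], simp)+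
    then show ?thesis
      using norm_Pair_le[of "fst p" "snd p"] by simp
  qed
  then show ?thesis
    unfolding bounded_iff by (intro exI ballI) auto
qed

section \<open>Connectedness of preimages of the moment map and of their quotients\<close>

lemma connected_chamber_Int_vimage:
  fixes Q :: "((real^'d::finite) \<times> (complex^'d)) set"
  assumes "connected Q" "Q \<subseteq> moment_cone"
  shows "connected (chamber F \<inter> hk_moment -` Q)"
proof (rule connected_closed_monotone_preimage)
  show "continuous_on (chamber F) hk_moment"
    by (rule continuous_on_hk_moment)
  show "hk_moment ` chamber F = moment_cone"
    by (rule hk_moment_chamber_image)
  show "closedin (top_of_set moment_cone) (hk_moment ` C)"
    if "closedin (top_of_set (chamber F)) C" for C
  proof (rule proper_map[OF that])
    fix U :: "((real^'d) \<times> (complex^'d)) set"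
    assume "compact U"
    then have "closed (chamber F \<inter> hk_moment -` U)" and "bounded (chamber F \<inter> hk_moment -` U)"
      by (simp_all add: closed_chamber closed_Int compact_imp_closed closed_vimage
          continuous_on_hk_moment compact_imp_bounded bounded_hk_moment_vimage bounded_Int)
    then show "compact (chamber F \<inter> hk_moment -` U)"
      by (simp add: compact_eq_bounded_closed)
  next
    show "hk_moment ` chamber F \<subseteq> moment_cone"
      using hk_moment_in_moment_cone by blast
  qed
  show "connected (chamber F \<inter> hk_moment -` {q})" if "q \<in> moment_cone" for q
  proof -
    obtain p where "p \<in> chamber F" "q = hk_moment p"
      using \<open>q \<in> moment_cone\<close> by (metis chamber_point_with_moment)
    have "continuous_on torus (\<lambda>t. tact t p)"
      unfolding tact_def by (intro continuous_intros)
    then show ?thesis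
      using \<open>p \<in> chamber F\<close> \<open>q = hk_moment p\<close>
      by (simp add: chamber_Int_fibre connected_continuous_image connected_torus)
  qed
qed (use assms in auto)

lemma connected_hk_moment_vimage:
  fixes Q :: "((real^'d::finite) \<times> (complex^'d)) set"
  assumes Q: "connected Q" "Q \<subseteq> moment_cone"
    and balanced: "\<And>k. \<exists>q\<in>Q. fst q $ k = cmod (snd q $ k)"
  shows "connected (hk_moment -` Q)"
proof -
  let ?L = "hk_moment -` Q"
  obtain q0 where "q0 \<in> Q"
    using balanced by blast
  then have "q0 \<in> moment_cone"
    using Q(2) by blast
  then obtain p0 where "p0 \<in> chamber {}" "hk_moment p0 = q0"
    by (rule chamber_point_with_moment)
  then have p0: "p0 \<in> chamber {} \<inter> ?L"
    using \<open>q0 \<in> Q\<close> by simp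
  let ?C = "connected_component_set ?L p0"
  have "chamber F \<inter> ?L \<subseteq> ?C" if "finite F" for F
    using that
  proof (induction F rule: finite_induct)
    case empty
    show ?case
      using p0 connected_chamber_Int_vimage[OF Q] by (intro connected_component_maximal) auto
  next
    case (insert k F)
    \<comment> \<open>The chambers for F and insert k F meet over every q with alpha_k = |gamma_k|.\<close>
    obtain q where q: "q \<in> Q" "fst q $ k = cmod (snd q $ k)"
      using balanced by blast
    then have "q \<in> moment_cone"
      using Q(2) by blast
    then obtain p where p: "p \<in> chamber F" "hk_moment p = q"
      by (rule chamber_point_with_moment)
    have "cmod (\<i> * fst p $ k * cnj (snd p $ k)) = ((cmod (fst p $ k))\<^sup>2 + (cmod (snd p $ k))\<^sup>2) / 2"
      using q(2) unfolding p(2)[symmetric] hk_moment_nth by simp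
    then have "cmod (fst p $ k) = cmod (snd p $ k)"
      by (simp only: cmod_mult_cnj_eq_iff)
    then have "p \<in> chamber (insert k F) \<inter> ?L"
      using p q(1) chamber_insert by blast
    moreover have "p \<in> ?C"
      using insert.IH p q(1) by blast
    then have "connected_component_set ?L p = ?C"
      by (rule connected_component_eq)
    ultimately show ?case
      using connected_chamber_Int_vimage[OF Q] connected_component_maximal inf.cobounded2
      by metis
  qed
  moreover have "p \<in> chamber {k. cmod (fst p $ k) < cmod (snd p $ k)}" for p
    by (auto simp: chamber_def)
  ultimately have "?L \<subseteq> ?C"
    using finite by blast
  then have "?C = ?L"
    using connected_component_subset by blast
  then show ?thesis
    by (metis connected_connected_component)
qed

lemma orbitN_eq_imp_tact:
  assumes "orbitN u p = orbitN u q"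
  shows "\<exists>t\<in>torus. q = tact t p"
proof -
  have "q = tact (\<chi> k. 1) q" and "(\<chi> k. 1) \<in> Nsub u"
    by (simp_all add: tact_def Nsub_def torus_def)
  then have "q \<in> orbitN u q"
    unfolding orbitN_def by (rule image_eqI)
  then have "q \<in> orbitN u p"
    using assms by simp
  then obtain t where "t \<in> Nsub u" "q = tact t p"
    unfolding orbitN_def by (rule imageE)
  moreover from this(1) have "t \<in> torus"
    by (simp add: Nsub_def)
  ultimately show ?thesis
    by blast
qed

lemma balanced_moment_if_connected_quotient:
  fixes Q :: "((real^'d::finite) \<times> (complex^'d)) set" and u :: "'d \<Rightarrow> int^'n::finite"
  assumes conn: "connected_space (quot_topology (top_of_set (hk_moment -` Q)) (orbitN u))"
    and p0: "p0 \<in> hk_moment -` Q"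
  shows "\<exists>q\<in>Q. fst q $ k = cmod (snd q $ k)"
proof -
  let ?L = "hk_moment -` Q"
  define h where "h p = cmod (fst p $ k) - cmod (snd p $ k)" for p :: "(complex^'d) \<times> (complex^'d)"
  have cont: "continuous_map (top_of_set ?L) euclideanreal h"
    unfolding h_def continuous_map_iff_continuous by (intro continuous_intros)
  have inv: "h p = h q" if "orbitN u p = orbitN u q" for p q
    using orbitN_eq_imp_tact[OF that] by (auto simp: h_def norm_tact_nth)
  have "connected (h ` ?L)"
    using connectedin_image_of_quotient_invariant[OF quotient_map_quot_topology conn cont inv]
    by simp
  moreover have "h p0 \<in> h ` ?L" "- h p0 \<in> h ` ?L"
  proof -
    have "reflect {k} p0 \<in> ?L" "h (reflect {k} p0) = - h p0"
      using p0 by (simp_all add: hk_moment_reflect h_def norm_reflect_nth)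
    then show "h p0 \<in> h ` ?L" "- h p0 \<in> h ` ?L"
      using p0 by (metis image_eqI)+
  qed
  then have "- \<bar>h p0\<bar> \<in> h ` ?L" "\<bar>h p0\<bar> \<in> h ` ?L"
    by (cases "0 \<le> h p0"; simp)+
  ultimately have "{- \<bar>h p0\<bar> .. \<bar>h p0\<bar>} \<subseteq> h ` ?L"
    by (rule connected_contains_Icc)
  then have "0 \<in> h ` ?L"
    by auto
  then obtain p where "p \<in> ?L" "0 = h p"
    by (rule imageE)
  then have "cmod (\<i> * fst p $ k * cnj (snd p $ k)) = ((cmod (fst p $ k))\<^sup>2 + (cmod (snd p $ k))\<^sup>2) / 2"
    by (simp only: cmod_mult_cnj_eq_iff) (simp add: h_def)
  then show ?thesis
    using \<open>p \<in> ?L\<close> by (intro bexI[of _ "hk_moment p"]) simp_all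
qed

lemma connected_quotient_hk_moment_vimage_iff:
  fixes Q :: "((real^'d::finite) \<times> (complex^'d)) set" and u :: "'d \<Rightarrow> int^'n::finite"
  assumes "connected Q" "Q \<subseteq> moment_cone" "hk_moment -` Q \<noteq> {}"
  shows "connected_space (quot_topology (top_of_set (hk_moment -` Q)) (orbitN u)) \<longleftrightarrow>
    (\<forall>k. \<exists>q\<in>Q. fst q $ k = cmod (snd q $ k))"
proof
  assume "connected_space (quot_topology (top_of_set (hk_moment -` Q)) (orbitN u))"
  then show "\<forall>k. \<exists>q\<in>Q. fst q $ k = cmod (snd q $ k)"
    using assms(3) balanced_moment_if_connected_quotient by blast
next
  assume "\<forall>k. \<exists>q\<in>Q. fst q $ k = cmod (snd q $ k)"
  then have "connected (hk_moment -` Q)"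
    using connected_hk_moment_vimage[OF assms(1,2)] by blast
  then show "connected_space (quot_topology (top_of_set (hk_moment -` Q)) (orbitN u))"
    by (intro connected_space_quotient_map_image[OF quotient_map_quot_topology])
      (simp add: connected_space_subtopology)
qed

section \<open>The level set and the set K\<close>

lemma linear_beta: "linear (beta u)"
  unfolding beta_def by (intro linearI) (simp_all add: sum.distrib scaleR_add_left scaleR_sum_right)

lemma beta_nth: "beta u x $ j = (\<Sum>k\<in>UNIV. x $ k * real_of_int (u k $ j))"
  by (simp add: beta_def)

lemma beta_axis: "beta u (axis k 1) = (\<chi> j. real_of_int (u k $ j))"
  by (simp add: beta_def axis_def if_distrib[of "\<lambda>c. c *\<^sub>R _"] cong: if_cong)

lemma orthogonal_comp_ker_eq_range_adjoint:
  fixes f :: "'m::euclidean_space \<Rightarrow> 'n::euclidean_space"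
  assumes "linear f"
  shows "(f -` {0})\<^sup>\<bottom> = range (adjoint f)"
  by (metis assms adjoint_linear ker_orthogonal_comp_adjoint linear_subspace_image
      orthogonal_comp_self subspace_UNIV)

lemma nker_orthogonal_imp_coords:
  fixes c :: "real^'d::finite" and u :: "'d \<Rightarrow> int^'n::finite"
  assumes "\<And>x. x \<in> nker u \<Longrightarrow> (\<Sum>k\<in>UNIV. x $ k * c $ k) = 0"
  shows "\<exists>a::real^'n. \<forall>k. (\<Sum>j\<in>UNIV. a $ j * real_of_int (u k $ j)) = c $ k"
proof -
  have "c \<in> (beta u -` {0})\<^sup>\<bottom>"
    using assms by (simp add: orthogonal_comp_def orthogonal_def nker_def inner_vec_def)
  then obtain a where a: "c = adjoint (beta u) a"
    unfolding orthogonal_comp_ker_eq_range_adjoint[OF linear_beta] by blast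
  have "c $ k = (\<Sum>j\<in>UNIV. a $ j * real_of_int (u k $ j))" for k
  proof -
    have "c $ k = c \<bullet> axis k 1"
      by (simp add: inner_axis)
    also have "\<dots> = a \<bullet> beta u (axis k 1)"
      by (metis a adjoint_works[OF linear_beta] inner_commute)
    also have "\<dots> = (\<Sum>j\<in>UNIV. a $ j * real_of_int (u k $ j))"
      by (simp add: beta_axis inner_vec_def)
    finally show ?thesis .
  qed
  then show ?thesis by metis
qed

lemma nker_orthogonal_imp_complex_coords:
  fixes c :: "complex^'d::finite" and u :: "'d \<Rightarrow> int^'n::finite"
  assumes "\<And>x. x \<in> nker u \<Longrightarrow> (\<Sum>k\<in>UNIV. of_real (x $ k) * c $ k) = 0"
  shows "\<exists>b::complex^'n. \<forall>k. (\<Sum>j\<in>UNIV. b $ j * of_int (u k $ j)) = c $ k"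
proof -
  obtain a1 :: "real^'n" where a1: "\<And>k. (\<Sum>j\<in>UNIV. a1 $ j * real_of_int (u k $ j)) = Re (c $ k)"
  proof -
    have "\<exists>a::real^'n. \<forall>k. (\<Sum>j\<in>UNIV. a $ j * real_of_int (u k $ j)) = (\<chi> k. Re (c $ k)) $ k"
      using arg_cong[OF assms, of _ Re] by (intro nker_orthogonal_imp_coords) simp
    then show ?thesis using that by auto
  qed
  obtain a2 :: "real^'n" where a2: "\<And>k. (\<Sum>j\<in>UNIV. a2 $ j * real_of_int (u k $ j)) = Im (c $ k)"
  proof -
    have "\<exists>a::real^'n. \<forall>k. (\<Sum>j\<in>UNIV. a $ j * real_of_int (u k $ j)) = (\<chi> k. Im (c $ k)) $ k"
      using arg_cong[OF assms, of _ Im] by (intro nker_orthogonal_imp_coords) simp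
    then show ?thesis using that by auto
  qed
  have "(\<Sum>j\<in>UNIV. (\<chi> j. Complex (a1 $ j) (a2 $ j)) $ j * of_int (u k $ j)) = c $ k" for k
    using a1[of k] a2[of k] by (simp add: complex_eq_iff)
  then show ?thesis by blast
qed

lemma nker_sum_coords_eq_0:
  fixes b :: "'a::real_field ^'n::finite" and u :: "'d::finite \<Rightarrow> int^'n"
  assumes "x \<in> nker u"
  shows "(\<Sum>k\<in>UNIV. of_real (x $ k) * (\<Sum>j\<in>UNIV. b $ j * of_int (u k $ j))) = 0"
proof -
  have "(\<Sum>k\<in>UNIV. of_real (x $ k) * (\<Sum>j\<in>UNIV. b $ j * of_int (u k $ j))) =
        (\<Sum>k\<in>UNIV. \<Sum>j\<in>UNIV. b $ j * of_real (x $ k * real_of_int (u k $ j)))"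
    by (simp add: sum_distrib_left mult.left_commute)
  also have "\<dots> = (\<Sum>j\<in>UNIV. \<Sum>k\<in>UNIV. b $ j * of_real (x $ k * real_of_int (u k $ j)))"
    by (rule sum.swap)
  also have "\<dots> = (\<Sum>j\<in>UNIV. b $ j * of_real (beta u x $ j))"
    by (simp only: beta_nth of_real_sum sum_distrib_left)
  also have "\<dots> = 0"
    using assms by (simp add: nker_def)
  finally show ?thesis .
qed

text \<open>The set K in the coordinates (a_k, b_k) of the statement.\<close>

definition Kcoords :: "('d::finite \<Rightarrow> int^'n::finite) \<Rightarrow> ('d \<Rightarrow> real) \<Rightarrow> ('d \<Rightarrow> real) \<Rightarrow> ('d \<Rightarrow> real)
     \<Rightarrow> ((real^'d) \<times> (complex^'d)) set" where
  "Kcoords u lam1 lam2 lam3 = moment_cone \<inter> (\<Inter>x \<in> nker u. {q.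
     (\<Sum>k\<in>UNIV. x $ k * (fst q $ k + lam1 k)) = 0 \<and>
     (\<Sum>k\<in>UNIV. of_real (x $ k) * (snd q $ k + Complex (lam2 k) (lam3 k))) = 0})"

lemma levelset_eq_hk_moment_vimage:
  fixes u :: "'d::finite \<Rightarrow> int^'n::finite"
  shows "levelset u lam1 lam2 lam3 = hk_moment -` Kcoords u lam1 lam2 lam3"
proof (intro set_eqI)
  fix p :: "(complex^'d) \<times> (complex^'d)"
  show "p \<in> levelset u lam1 lam2 lam3 \<longleftrightarrow> p \<in> hk_moment -` Kcoords u lam1 lam2 lam3"
    by (cases p) (simp add: levelset_def Kcoords_def hk_moment_in_moment_cone distrib_left
        add_divide_distrib)
qed

lemma Kcoords_subset_moment_cone: "Kcoords u lam1 lam2 lam3 \<subseteq> moment_cone"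
  by (auto simp: Kcoords_def)

lemma convex_affine_constraints:
  fixes x :: "real^'d::finite" and c :: "'d \<Rightarrow> real" and e :: "'d \<Rightarrow> complex"
  shows "convex {q :: (real^'d) \<times> (complex^'d). (\<Sum>k\<in>UNIV. x $ k * (fst q $ k + c k)) = 0 \<and>
           (\<Sum>k\<in>UNIV. of_real (x $ k) * (snd q $ k + e k)) = 0}"
    (is "convex ?H")
proof -
  let ?f = "\<lambda>q :: (real^'d) \<times> (complex^'d).
    ((\<Sum>k\<in>UNIV. x $ k * fst q $ k), (\<Sum>k\<in>UNIV. of_real (x $ k) * snd q $ k))"
  have lin: "linear ?f"
    by (intro linearI) (simp_all add: sum.distrib sum_distrib_left algebra_simps, simp add: scaleR_sum_right)
  have eq: "?H = ?f -` {(- (\<Sum>k\<in>UNIV. x $ k * c k), - (\<Sum>k\<in>UNIV. of_real (x $ k) * e k))}"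
    by (auto simp: distrib_left sum.distrib add_eq_0_iff)
  show ?thesis
    unfolding eq by (rule convex_linear_vimage[OF lin convex_singleton])
qed

lemma convex_Kcoords: "convex (Kcoords u lam1 lam2 lam3)"
  unfolding Kcoords_def
  by (intro convex_Int convex_moment_cone convex_INT convex_affine_constraints)

lemma Kset_coords_mem_Kcoords:
  fixes u :: "'d::finite \<Rightarrow> int^'n::finite"
  assumes "(a, b) \<in> Kset u lam1 lam2 lam3"
  shows "((\<chi> k. acoord u lam1 a k), (\<chi> k. bcoord u lam2 lam3 b k)) \<in> Kcoords u lam1 lam2 lam3"
proof -
  have "(\<Sum>k\<in>UNIV. x $ k * (acoord u lam1 a k + lam1 k)) = 0"
    and "(\<Sum>k\<in>UNIV. of_real (x $ k) * (bcoord u lam2 lam3 b k + Complex (lam2 k) (lam3 k))) = 0"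
    if "x \<in> nker u" for x
    using nker_sum_coords_eq_0[OF that, of a] nker_sum_coords_eq_0[OF that, of b]
    by (simp_all add: acoord_def bcoord_def)
  then show ?thesis
    using assms by (simp add: Kcoords_def Kset_def moment_cone_def)
qed

lemma Kcoords_imp_Kset_coords:
  fixes u :: "'d::finite \<Rightarrow> int^'n::finite"
  assumes q: "q \<in> Kcoords u lam1 lam2 lam3"
  obtains a b where "(a, b) \<in> Kset u lam1 lam2 lam3"
    "q = ((\<chi> k. acoord u lam1 a k), (\<chi> k. bcoord u lam2 lam3 b k))"
proof -
  obtain a :: "real^'n" where a: "\<And>k. (\<Sum>j\<in>UNIV. a $ j * real_of_int (u k $ j)) = fst q $ k + lam1 k"
  proof -
    have "\<exists>a::real^'n. \<forall>k. (\<Sum>j\<in>UNIV. a $ j * real_of_int (u k $ j)) = (\<chi> k. fst q $ k + lam1 k) $ k"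
      using q by (intro nker_orthogonal_imp_coords) (simp add: Kcoords_def)
    then show ?thesis
      using that by auto
  qed
  obtain b :: "complex^'n" where
    b: "\<And>k. (\<Sum>j\<in>UNIV. b $ j * of_int (u k $ j)) = snd q $ k + Complex (lam2 k) (lam3 k)"
  proof -
    have "\<exists>b::complex^'n. \<forall>k. (\<Sum>j\<in>UNIV. b $ j * of_int (u k $ j)) =
            (\<chi> k. snd q $ k + Complex (lam2 k) (lam3 k)) $ k"
      using q by (intro nker_orthogonal_imp_complex_coords) (simp add: Kcoords_def)
    then show ?thesis
      using that by auto
  qed
  have "q = ((\<chi> k. acoord u lam1 a k), (\<chi> k. bcoord u lam2 lam3 b k))"
    using a b by (simp add: acoord_def bcoord_def prod_eq_iff vec_eq_iff)
  moreover from this have "(a, b) \<in> Kset u lam1 lam2 lam3"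
    using q by (auto simp: Kset_def Kcoords_def moment_cone_def)
  ultimately show ?thesis
    using that by blast
qed

lemma Kcoords_eq_image:
  fixes u :: "'d::finite \<Rightarrow> int^'n::finite"
  shows "Kcoords u lam1 lam2 lam3 =
    (\<lambda>(a, b). ((\<chi> k. acoord u lam1 a k), (\<chi> k. bcoord u lam2 lam3 b k))) ` Kset u lam1 lam2 lam3"
  by (auto simp: Kset_coords_mem_Kcoords elim!: Kcoords_imp_Kset_coords)

theorem corollary5p4:
  fixes u :: "'d::finite \<Rightarrow> int^'n::finite"
    and lam1 lam2 lam3 :: "'d \<Rightarrow> real"
  assumes span: "span (range (\<lambda>k. (\<chi> j. real_of_int (u k $ j)) :: real^'n)) = UNIV"
    and nonempty: "topspace (Mspace u lam1 lam2 lam3) \<noteq> {}"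
  shows "connected_space (Mspace u lam1 lam2 lam3) \<longleftrightarrow>
    (\<forall>k. \<exists>(a, b) \<in> Kset u lam1 lam2 lam3.
        acoord u lam1 a k = cmod (bcoord u lam2 lam3 b k))"
proof -
  let ?Q = "Kcoords u lam1 lam2 lam3"
  have M: "Mspace u lam1 lam2 lam3 = quot_topology (top_of_set (hk_moment -` ?Q)) (orbitN u)"
    by (simp add: Mspace_def levelset_eq_hk_moment_vimage)
  have "hk_moment -` ?Q \<noteq> {}"
    using nonempty by (simp add: M topspace_quot_topology)
  moreover have "(\<exists>(a, b) \<in> Kset u lam1 lam2 lam3. acoord u lam1 a k = cmod (bcoord u lam2 lam3 b k))
      \<longleftrightarrow> (\<exists>q\<in>?Q. fst q $ k = cmod (snd q $ k))" for k
    unfolding Kcoords_eq_image by (simp add: Bex_def split_beta)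
  ultimately show ?thesis
    unfolding M
    using connected_quotient_hk_moment_vimage_iff[OF convex_connected[OF convex_Kcoords]
        Kcoords_subset_moment_cone]
    by simp
qed

end
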